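(* Let $a,b$ be non-negative integers and $c=1$ such that the polynomial $x^3-ax^2-bx-c$ has exactly one real root $\eta_1$, and $\eta_1>1$. Then there exists a constant $T$ such that for any positive integers $n,k$ with $k\ge 4$, the number of positive integer sequences $\langle x_i\rangle_{i=1}^k$ satisfying $x_{i+3}=ax_{i+2}+bx_{i+1}+cx_i$ for $1\le i\le k-3$ and terminating at $x_k=n$ is at most \[\left\lceil T\frac{n}{\eta_1^{3k/2}}\right\rceil^2.\]
   Context: A sequence $\langle x_i\rangle_{i=1}^k$ is positive if $x_1,x_2,x_3>0$. *)

theory Defs
  imports Complex_Main
begin

text \<open>Sequences x_1..x_k are lists of length k (0-based: xs!(i-1) = x_i).
  The recurrence x_{i+3} = a x_{i+2} + b x_{i+1} + c x_i for 1 <= i <= k-3.\<close>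
definition rec_seqs :: "int \<Rightarrow> int \<Rightarrow> int \<Rightarrow> nat \<Rightarrow> int \<Rightarrow> int list set" where
  "rec_seqs a b c k n = {xs. length xs = k \<and> (\<forall>i<k. xs ! i > 0)
      \<and> (\<forall>i. i + 3 < k \<longrightarrow> xs ! (i+3) = a * xs ! (i+2) + b * xs ! (i+1) + c * xs ! i)
      \<and> xs ! (k - 1) = n}"

end

theory Submission
  imports Defs
begin

text \<open>
  Write the cubic as (x - \<eta>)(x^2 + (\<eta> - a) x + 1/\<eta>); as \<eta> is its only real root, the
  norm form of the quadratic factor is positive definite. Along a real solution of the
  recurrence the linear form x_m + (b + 1/\<eta>) x_(m+1) + \<eta> x_(m+2) is multiplied by \<eta> at
  each step, while the norm form evaluated at the deviations x_(m+1) - \<eta> x_m and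
  x_(m+2) - \<eta> x_(m+1) is divided by \<eta>. For a positive solution both start out comparable,
  so in the last window the deviations are \<eta>^(-3m/2) times the linear form, up to a constant.
  The linear form there is O(n): for late windows because the deviations are then small,
  for the finitely many early ones because finiteness of the solution set forces
  x_0, x_1, x_2 \<le> n. Hence the last two entries, which determine the sequence, lie in a
  box of side O(n / \<eta>^(3k/2)).
\<close>

definition bqf :: "real \<Rightarrow> real \<Rightarrow> real \<Rightarrow> real \<Rightarrow> real" where
  "bqf s t u v = v^2 + s*u*v + t*u^2"

lemma bqf_pos_def:
  assumes "s^2 < 4*t"
  obtains d where "d > 0" "\<And>u v. d*u^2 \<le> bqf s t u v" "\<And>u v. d*v^2 \<le> bqf s t u v"
proof
  have t: "t > 0" using assms zero_le_power2[of s] by linarith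
  define D where "D = 4*t - s^2"
  have D: "D > 0" using assms unfolding D_def by simp
  show "min (D/4) (D/(4*t)) > 0" using D t by simp
  fix u v
  have "bqf s t u v = D/4 * u^2 + (v + s*u/2)^2"
    unfolding bqf_def D_def by (simp add: field_simps power2_eq_square)
  then have "D/4 * u^2 \<le> bqf s t u v" by simp
  moreover have "min (D/4) (D/(4*t)) * u^2 \<le> D/4 * u^2"
    by (intro mult_right_mono min.cobounded1) simp
  ultimately show "min (D/4) (D/(4*t)) * u^2 \<le> bqf s t u v" by linarith
  have "bqf s t u v = D/(4*t) * v^2 + t * (u + s*v/(2*t))^2"
    unfolding bqf_def D_def using t by (simp add: field_simps power2_eq_square)
  then have "D/(4*t) * v^2 \<le> bqf s t u v" using t by simp
  moreover have "min (D/4) (D/(4*t)) * v^2 \<le> D/(4*t) * v^2"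
    by (intro mult_right_mono min.cobounded2) simp
  ultimately show "min (D/4) (D/(4*t)) * v^2 \<le> bqf s t u v" by linarith
qed

lemma bqf_le:
  assumes "\<bar>u\<bar> \<le> M" "\<bar>v\<bar> \<le> M" "t \<ge> 0"
  shows "bqf s t u v \<le> (1 + \<bar>s\<bar> + t) * M^2"
proof -
  have "v^2 \<le> M^2" "u^2 \<le> M^2"
    using assms power_mono[of "\<bar>v\<bar>" M 2] power_mono[of "\<bar>u\<bar>" M 2] by simp_all
  moreover have "s*u*v \<le> \<bar>s\<bar> * M^2"
  proof -
    have "s*u*v \<le> \<bar>s\<bar> * (\<bar>u\<bar> * \<bar>v\<bar>)" by (simp add: abs_mult mult.assoc flip: abs_mult)
    also have "\<dots> \<le> \<bar>s\<bar> * M^2"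
      using assms by (intro mult_left_mono) (auto simp: power2_eq_square mult_mono)
    finally show ?thesis .
  qed
  ultimately show ?thesis unfolding bqf_def using assms(3)
    by (simp add: distrib_right mult_left_mono add_mono)
qed

lemma sq_nat_floor_add_one_le_sq_ceiling_double:
  fixes w :: real
  assumes "w > 0"
  shows "real ((nat \<lfloor>w\<rfloor> + 1)^2) \<le> (real_of_int \<lceil>2*w\<rceil>)^2"
proof -
  have "\<lfloor>w\<rfloor> + 1 \<le> \<lceil>2*w\<rceil>"
  proof (cases "w < 1")
    case True
    then have "\<lfloor>w\<rfloor> = 0" using assms by (simp add: floor_eq_iff)
    then show ?thesis using assms by (simp add: le_ceiling_iff)
  next
    case False
    then have "of_int \<lfloor>w\<rfloor> + 1 \<le> 2*w" using of_int_floor_le[of w] by linarith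
    then show ?thesis using le_of_int_ceiling[of "2*w"] by linarith
  qed
  then have "real_of_int (\<lfloor>w\<rfloor> + 1) \<le> real_of_int \<lceil>2*w\<rceil>"
    by (simp only: of_int_le_iff)
  then have "(real_of_int \<lfloor>w\<rfloor> + 1)^2 \<le> (real_of_int \<lceil>2*w\<rceil>)^2"
    using assms by (intro power_mono) simp_all
  then show ?thesis using assms by simp
qed

lemma powr_three_halves_split:
  fixes x :: real
  assumes "k \<ge> 3"
  shows "x powr (3 * real k / 2) = x powr (3 * real (k-3) / 2) * x powr (9/2)"
proof -
  have "3 * real k / 2 = 3 * real (k-3) / 2 + 9/2" using assms by (simp add: field_simps)
  then show ?thesis by (simp only: powr_add)
qed

lemma abs_le_of_sq_mult_le:
  fixes y E M :: real
  assumes "y^2 * E \<le> M^2" "E > 0" "M \<ge> 0"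
  shows "\<bar>y\<bar> \<le> M / sqrt E"
proof -
  have "\<bar>y\<bar> * sqrt E = sqrt (y^2 * E)" using assms(2) by (simp add: real_sqrt_mult)
  also have "\<dots> \<le> M" using assms(1,3) real_sqrt_le_mono by fastforce
  finally show ?thesis using assms(2) by (simp add: pos_le_divide_eq)
qed

section \<open>The two invariants of the recurrence\<close>

locale cubic_unit_root =
  fixes a b \<eta> :: real
  assumes eta_pos: "\<eta> > 0"
    and root: "\<eta>^3 = a*\<eta>^2 + b*\<eta> + 1"
begin

lemma b_eq: "b = \<eta>^2 - a*\<eta> - 1/\<eta>"
  using root eta_pos by (simp add: field_simps power2_eq_square power3_eq_cube)

lemma cubic_factor: "x^3 - a*x^2 - b*x - 1 = (x - \<eta>) * (x^2 + (\<eta> - a)*x + 1/\<eta>)"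
  unfolding b_eq using eta_pos by (simp add: field_simps power2_eq_square power3_eq_cube)

definition rec_on :: "nat \<Rightarrow> (nat \<Rightarrow> real) \<Rightarrow> bool" where
  "rec_on k x \<longleftrightarrow> (\<forall>i. i + 3 < k \<longrightarrow> x (i+3) = a * x (i+2) + b * x (i+1) + x i)"

text \<open>\<open>(1, b + 1/\<eta>, \<eta>)\<close> is a left eigenvector of the companion matrix for \<open>\<eta>\<close>.\<close>

definition growth :: "(nat \<Rightarrow> real) \<Rightarrow> nat \<Rightarrow> real" where
  "growth x m = x m + (b + 1/\<eta>) * x (m+1) + \<eta> * x (m+2)"

definition dev :: "(nat \<Rightarrow> real) \<Rightarrow> nat \<Rightarrow> real" where
  "dev x m = x (m+1) - \<eta> * x m"

text \<open>\<open>bqf (\<eta> - a) (1/\<eta>)\<close> is the norm form of the quadratic factor in \<open>cubic_factor\<close>.\<close>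

definition decay :: "(nat \<Rightarrow> real) \<Rightarrow> nat \<Rightarrow> real" where
  "decay x m = bqf (\<eta> - a) (1/\<eta>) (dev x m) (dev x (m+1))"

lemma growth_Suc:
  assumes "x (m+3) = a * x (m+2) + b * x (m+1) + x m"
  shows "growth x (Suc m) = \<eta> * growth x m"
proof -
  have "growth x (Suc m) = x (m+1) + (b + 1/\<eta>) * x (m+2) + \<eta> * (a * x (m+2) + b * x (m+1) + x m)"
    using assms unfolding growth_def by (simp add: numeral_3_eq_3 numeral_2_eq_2)
  also have "\<dots> = \<eta> * growth x m"
    unfolding growth_def using eta_pos by (simp add: b_eq field_simps power2_eq_square)
  finally show ?thesis .
qed

lemma decay_Suc:
  assumes "x (m+3) = a * x (m+2) + b * x (m+1) + x m"
  shows "decay x (Suc m) = decay x m / \<eta>"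
proof -
  have "decay x (Suc m) = bqf (\<eta> - a) (1/\<eta>) (x (m+2) - \<eta> * x (m+1))
      (a * x (m+2) + b * x (m+1) + x m - \<eta> * x (m+2))"
    using assms unfolding decay_def dev_def by (simp add: numeral_3_eq_3 numeral_2_eq_2)
  also have "\<dots> = decay x m / \<eta>"
    unfolding decay_def dev_def bqf_def using eta_pos
    by (simp add: b_eq field_simps power2_eq_square numeral_2_eq_2)
  finally show ?thesis .
qed

lemma growth_eq_power_mult:
  assumes "rec_on k x" "m + 2 < k"
  shows "growth x m = \<eta>^m * growth x 0"
  using assms(2)
proof (induction m)
  case (Suc m)
  then show ?case using growth_Suc assms(1) unfolding rec_on_def by simp
qed simp

lemma decay_eq_divide_power:
  assumes "rec_on k x" "m + 2 < k"
  shows "decay x m = decay x 0 / \<eta>^m"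
  using assms(2)
proof (induction m)
  case (Suc m)
  then show ?case using decay_Suc assms(1) unfolding rec_on_def by simp
qed simp

lemma decay_le_growth_sq:
  assumes "\<eta> \<ge> 1" "b \<ge> 0" "x m > 0" "x (m+1) > 0" "x (m+2) > 0"
  shows "decay x m \<le> (1 + \<bar>\<eta> - a\<bar> + 1/\<eta>) * (2*\<eta>^2 * growth x m)^2"
proof -
  define L where "L = growth x m"
  have "x (m+1) / \<eta> \<le> (b + 1/\<eta>) * x (m+1)"
    using assms(2,4) by (simp add: distrib_right)
  moreover have "0 \<le> (b + 1/\<eta>) * x (m+1)" "0 \<le> \<eta> * x (m+2)" "0 \<le> x m"
    using assms eta_pos by simp_all
  moreover have "x (m+2) \<le> \<eta> * x (m+2)" using assms by simp
  ultimately have "x m \<le> L" "x (m+1) / \<eta> \<le> L" "x (m+2) \<le> L"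
    unfolding L_def growth_def by linarith+
  then have bounds: "x m \<le> L" "x (m+1) \<le> \<eta> * L" "x (m+2) \<le> L"
    using eta_pos by (simp_all add: divide_le_eq mult.commute)
  have "L \<le> \<eta> * L"
    using assms bounds by (simp add: mult_le_cancel_right1)
  moreover have "\<eta> * L \<le> \<eta>^2 * L"
    using mult_left_mono[OF \<open>L \<le> \<eta> * L\<close>, of \<eta>] eta_pos by (simp add: power2_eq_square)
  ultimately have L_le: "L \<le> \<eta>^2 * L" "\<eta> * L \<le> \<eta>^2 * L" by linarith+
  have scaled: "\<eta> * x m \<le> \<eta> * L" "\<eta> * x (m+1) \<le> \<eta>^2 * L"
    "0 \<le> \<eta> * x m" "0 \<le> \<eta> * x (m+1)"
    using bounds eta_pos assms by (simp_all add: power2_eq_square)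
  have "\<bar>x (m+1) - \<eta> * x m\<bar> \<le> 2*\<eta>^2 * L" "\<bar>x (m+2) - \<eta> * x (m+1)\<bar> \<le> 2*\<eta>^2 * L"
    by (rule abs_leI; use assms bounds L_le scaled in linarith)+
  then have "\<bar>dev x m\<bar> \<le> 2*\<eta>^2 * L" "\<bar>dev x (m+1)\<bar> \<le> 2*\<eta>^2 * L"
    unfolding dev_def by (simp_all add: numeral_2_eq_2)
  then show ?thesis
    unfolding decay_def L_def using bqf_le eta_pos by simp
qed

lemma decay_mult_power_le_growth_sq:
  assumes "\<eta> \<ge> 1" "b \<ge> 0" "rec_on k x" "\<And>i. i < k \<Longrightarrow> x i > 0" "m + 2 < k"
  shows "decay x m * \<eta>^(3*m) \<le> (1 + \<bar>\<eta> - a\<bar> + 1/\<eta>) * (2*\<eta>^2 * growth x m)^2"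
proof -
  have "\<eta>^(3*m) = \<eta>^m * (\<eta>^m)^2"
    by (simp flip: power_mult power_add)
  then have "decay x m * \<eta>^(3*m) = (\<eta>^m)^2 * decay x 0"
    using decay_eq_divide_power[OF assms(3,5)] eta_pos by simp
  also have "\<dots> \<le> (\<eta>^m)^2 * ((1 + \<bar>\<eta> - a\<bar> + 1/\<eta>) * (2*\<eta>^2 * growth x 0)^2)"
    using decay_le_growth_sq[of x 0] assms by (intro mult_left_mono) auto
  also have "\<dots> = (1 + \<bar>\<eta> - a\<bar> + 1/\<eta>) * (2*\<eta>^2 * growth x m)^2"
    using growth_eq_power_mult[OF assms(3,5)] by (simp add: power_mult_distrib)
  finally show ?thesis .
qed

end

section \<open>Positive integer solutions\<close>

fun lin_rec :: "int \<Rightarrow> int \<Rightarrow> int \<Rightarrow> int \<Rightarrow> int \<Rightarrow> nat \<Rightarrow> int" where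
  "lin_rec a b p q r 0 = p"
| "lin_rec a b p q r (Suc 0) = q"
| "lin_rec a b p q r (Suc (Suc 0)) = r"
| "lin_rec a b p q r (Suc (Suc (Suc i))) =
     a * lin_rec a b p q r (Suc (Suc i)) + b * lin_rec a b p q r (Suc i) + lin_rec a b p q r i"

lemma lin_rec_linear:
  "lin_rec a b p q r i = p * lin_rec a b 1 0 0 i + q * lin_rec a b 0 1 0 i + r * lin_rec a b 0 0 1 i"
  by (induction a b p q r i rule: lin_rec.induct) (simp_all add: algebra_simps)

lemma lin_rec_nonneg:
  "a \<ge> 0 \<Longrightarrow> b \<ge> 0 \<Longrightarrow> p \<ge> 0 \<Longrightarrow> q \<ge> 0 \<Longrightarrow> r \<ge> 0 \<Longrightarrow> lin_rec a b p q r i \<ge> 0"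
  by (induction a b p q r i rule: lin_rec.induct) simp_all

lemma lin_rec_le:
  assumes "a \<ge> 0" "b \<ge> 0" "p \<le> N" "q \<le> N" "r \<le> N" "0 \<le> p" "0 \<le> q" "0 \<le> r"
  shows "lin_rec a b p q r i \<le> N * (1 + a + b)^i"
  using assms
proof (induction a b p q r i rule: lin_rec.induct)
  case (2 a b p q r)
  have "N * 1 \<le> N * (1 + a + b)" using 2 by (intro mult_left_mono) auto
  then show ?case using 2 by simp
next
  case (3 a b p q r)
  have "N * 1 \<le> N * (1 + a + b)^2" using 3 by (intro mult_left_mono one_le_power) auto
  then show ?case using 3 by (simp add: numeral_2_eq_2)
next
  case (4 a b p q r i)
  define B where "B = (1 + a + b)^Suc (Suc i)"
  have mono: "N * (1 + a + b)^j \<le> N * B" if "j \<le> Suc (Suc i)" for j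
    unfolding B_def using 4 that by (intro mult_left_mono power_increasing) auto
  have IH: "lin_rec a b p q r (Suc (Suc i)) \<le> N * B" "lin_rec a b p q r (Suc i) \<le> N * B"
    "lin_rec a b p q r i \<le> N * B"
    using 4 mono[of i] mono[of "Suc i"] unfolding B_def by simp_all
  have "lin_rec a b p q r (Suc (Suc (Suc i))) \<le> a * (N * B) + b * (N * B) + N * B"
    unfolding lin_rec.simps(4) using 4 IH by (intro add_mono mult_left_mono) auto
  then show ?case unfolding B_def by (simp add: algebra_simps)
qed simp

lemma rec_seqsD:
  assumes "xs \<in> rec_seqs a b c k n"
  shows "length xs = k" "\<And>i. i < k \<Longrightarrow> xs ! i > 0"
    "\<And>i. i + 3 < k \<Longrightarrow> xs ! (i+3) = a * xs ! (i+2) + b * xs ! (i+1) + c * xs ! i"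
    "xs ! (k - 1) = n"
  using assms unfolding rec_seqs_def by auto

lemma rec_seqs_nth_eq_lin_rec:
  assumes "xs \<in> rec_seqs a b 1 k n" "i < k"
  shows "xs ! i = lin_rec a b (xs!0) (xs!1) (xs!2) i"
  using assms(2)
proof (induction i rule: less_induct)
  case (less i)
  show ?case
  proof (cases "i < 3")
    case True
    then show ?thesis by (auto simp: less_Suc_eq numeral_3_eq_3 numeral_2_eq_2)
  next
    case False
    then obtain j where i: "i = j + 3"
      by (metis add.commute le_add_diff_inverse not_less)
    then have "xs ! i = a * xs ! (j+2) + b * xs ! (j+1) + xs ! j"
      using rec_seqsD(3)[OF assms(1), of j] less.prems by (simp add: numeral_3_eq_3)
    then show ?thesis
      using less.IH[of "j+2"] less.IH[of "j+1"] less.IH[of j] less.prems i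
      by (simp add: numeral_3_eq_3)
  qed
qed

lemma infinite_rec_seqs:
  assumes "a \<ge> 0" "b \<ge> 0" "xs \<in> rec_seqs a b 1 k n" "p \<ge> 0" "q \<ge> 0" "r \<ge> 0"
    and "lin_rec a b p q r (k - 1) = 0" "i < k" "lin_rec a b p q r i \<noteq> 0"
  shows "infinite (rec_seqs a b 1 k n)"
proof -
  define g where "g = lin_rec a b p q r"
  define f where "f t = map (\<lambda>j. xs ! j + int t * g j) [0..<k]" for t
  have "g j \<ge> 0" for j
    unfolding g_def using lin_rec_nonneg assms by blast
  then have "xs ! j + int t * g j > 0" if "j < k" for j t
    using rec_seqsD(2)[OF assms(3) that] by (simp add: add_pos_nonneg)
  moreover have "g (j+3) = a * g (j+2) + b * g (j+1) + g j" for j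
    unfolding g_def by (simp add: numeral_3_eq_3 numeral_2_eq_2)
  ultimately have f_mem: "f t \<in> rec_seqs a b 1 k n" for t
    using rec_seqsD[OF assms(3)] assms(7,8)[folded g_def]
    unfolding rec_seqs_def f_def by (auto simp: algebra_simps)
  have "inj f"
  proof (rule injI)
    fix s t assume "f s = f t"
    then have "f s ! i = f t ! i" by simp
    then show "s = t" using assms(8,9) unfolding f_def g_def by simp
  qed
  then have "infinite (range f)"
    using finite_imageD infinite_UNIV_nat by blast
  then show ?thesis
    using f_mem by (meson image_subsetI infinite_super)
qed

lemma rec_seqs_nth_le:
  assumes "a \<ge> 0" "b \<ge> 0" "finite (rec_seqs a b 1 k n)" "xs \<in> rec_seqs a b 1 k n"
    and "k \<ge> 3" "i < k"
  shows "xs ! i \<le> n * (1 + a + b)^i"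
proof -
  \<comment> \<open>n = x_0 E_0 + x_1 E_1 + x_2 E_2 with E_j \<ge> 0, and finiteness excludes E_j = 0.\<close>
  have coeff_ge_1: "lin_rec a b p q r (k - 1) \<ge> 1"
    if "p \<ge> 0" "q \<ge> 0" "r \<ge> 0" "j < k" "lin_rec a b p q r j \<noteq> 0" for p q r j
  proof (rule ccontr)
    assume "\<not> lin_rec a b p q r (k - 1) \<ge> 1"
    then have "lin_rec a b p q r (k - 1) = 0"
      using lin_rec_nonneg[OF assms(1,2) that(1-3), of "k - 1"] by linarith
    then show False
      using infinite_rec_seqs[OF assms(1,2,4) that(1-3) _ that(4,5)] assms(3) by blast
  qed
  define x where "x j = xs ! j" for j
  have x_pos: "x 0 > 0" "x 1 > 0" "x 2 > 0"
    using rec_seqsD(2)[OF assms(4)] assms(5) unfolding x_def by auto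
  have "n = lin_rec a b (x 0) (x 1) (x 2) (k-1)"
    using rec_seqs_nth_eq_lin_rec[OF assms(4), of "k-1"] rec_seqsD(4)[OF assms(4)] assms(5)
    unfolding x_def by simp
  also have "\<dots> = x 0 * lin_rec a b 1 0 0 (k-1) + x 1 * lin_rec a b 0 1 0 (k-1) + x 2 * lin_rec a b 0 0 1 (k-1)"
    by (rule lin_rec_linear)
  finally have "n = \<dots>" .
  moreover have "x 0 \<le> x 0 * lin_rec a b 1 0 0 (k-1)" "x 1 \<le> x 1 * lin_rec a b 0 1 0 (k-1)"
    "x 2 \<le> x 2 * lin_rec a b 0 0 1 (k-1)"
    using x_pos coeff_ge_1[of 1 0 0 0] coeff_ge_1[of 0 1 0 1] coeff_ge_1[of 0 0 1 2] assms(5)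
    by (simp_all add: numeral_2_eq_2)
  ultimately have "x 0 \<le> n" "x 1 \<le> n" "x 2 \<le> n"
    using x_pos by (smt (verit) mult_pos_pos)+
  then show ?thesis
    using rec_seqs_nth_eq_lin_rec[OF assms(4,6)] lin_rec_le[OF assms(1,2)] x_pos
    unfolding x_def by simp
qed

lemma inj_on_last_two_rec_seqs:
  assumes "k \<ge> 3"
  shows "inj_on (\<lambda>xs. (xs ! (k-3), xs ! (k-2))) (rec_seqs a b 1 k n)"
proof (rule inj_onI)
  fix xs zs assume xs: "xs \<in> rec_seqs a b 1 k n" and zs: "zs \<in> rec_seqs a b 1 k n"
    and last_two: "(xs ! (k-3), xs ! (k-2)) = (zs ! (k-3), zs ! (k-2))"
  let ?agree_from = "\<lambda>i. \<forall>l. i \<le> l \<and> l < k \<longrightarrow> xs ! l = zs ! l"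
  have "?agree_from 0"
  proof (rule inc_induct[of 0 "k-3"])
    show "?agree_from (k-3)"
    proof (intro allI impI)
      fix l assume "k - 3 \<le> l \<and> l < k"
      then have "l = k-3 \<or> l = k-2 \<or> l = k-1" by linarith
      then show "xs ! l = zs ! l"
        using last_two rec_seqsD(4)[OF xs] rec_seqsD(4)[OF zs] by auto
    qed
  next
    fix i assume "i < k - 3" "?agree_from (Suc i)"
    moreover have "xs ! i = zs ! i"
      using rec_seqsD(3)[OF xs, of i] rec_seqsD(3)[OF zs, of i] \<open>i < k - 3\<close> \<open>?agree_from (Suc i)\<close>
      by (simp add: numeral_3_eq_3 numeral_2_eq_2)
    ultimately show "?agree_from i" by (metis le_antisym not_less_eq_eq)
  qed simp
  then show "xs = zs"
    using rec_seqsD(1)[OF xs] rec_seqsD(1)[OF zs] by (simp add: nth_equalityI)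
qed

lemma card_int_near_le:
  fixes c e R :: real
  assumes "e > 0" "R \<ge> 0"
  shows "finite {u::int. \<bar>c - e * u\<bar> \<le> R}" "card {u::int. \<bar>c - e * u\<bar> \<le> R} \<le> nat \<lfloor>2*R/e\<rfloor> + 1"
proof -
  have sub: "{u::int. \<bar>c - e * u\<bar> \<le> R} \<subseteq> {\<lceil>(c - R)/e\<rceil> .. \<lfloor>(c + R)/e\<rfloor>}"
    using assms by (auto simp: abs_le_iff ceiling_le_iff le_floor_iff pos_divide_le_eq pos_le_divide_eq mult.commute)
  then show "finite {u::int. \<bar>c - e * u\<bar> \<le> R}" by (rule finite_subset) simp
  have "\<lfloor>(c + R)/e\<rfloor> - \<lceil>(c - R)/e\<rceil> \<le> \<lfloor>2*R/e\<rfloor>"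
  proof -
    have "of_int (\<lfloor>(c + R)/e\<rfloor> - \<lceil>(c - R)/e\<rceil>) \<le> (c + R)/e - (c - R)/e"
      using of_int_floor_le[of "(c + R)/e"] le_of_int_ceiling[of "(c - R)/e"] by linarith
    also have "\<dots> = 2*R/e" using assms(1) by (simp add: field_simps)
    finally show ?thesis by (simp add: le_floor_iff)
  qed
  then have "card {\<lceil>(c - R)/e\<rceil> .. \<lfloor>(c + R)/e\<rfloor>} \<le> nat \<lfloor>2*R/e\<rfloor> + 1"
    by simp
  then show "card {u::int. \<bar>c - e * u\<bar> \<le> R} \<le> nat \<lfloor>2*R/e\<rfloor> + 1"
    using card_mono[OF _ sub] by (meson finite_atLeastAtMost_int order_trans)
qed

lemma card_int_pairs_near_le:
  fixes c e R :: real
  assumes "e > 0" "R \<ge> 0"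
  defines "P \<equiv> {(u::int, v::int). \<bar>c - e * v\<bar> \<le> R \<and> \<bar>v - e * u\<bar> \<le> R}"
  shows "finite P" "card P \<le> (nat \<lfloor>2*R/e\<rfloor> + 1)^2"
proof -
  define N where "N = nat \<lfloor>2*R/e\<rfloor> + 1"
  define V where "V = {v::int. \<bar>c - e * v\<bar> \<le> R}"
  define U where "U v = {u::int. \<bar>of_int v - e * u\<bar> \<le> R}" for v :: int
  have P: "P = (\<Union>v\<in>V. U v \<times> {v})"
    unfolding P_def U_def V_def by auto
  have V: "finite V" "card V \<le> N" and U: "finite (U v)" "card (U v) \<le> N" for v
    unfolding V_def U_def N_def using card_int_near_le[OF assms(1,2)] by blast+
  show "finite P" unfolding P using U V by simp
  have "card P \<le> (\<Sum>v\<in>V. card (U v \<times> {v}))"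
    unfolding P using V(1) by (rule card_UN_le)
  also have "\<dots> \<le> card V * N"
    using U sum_bounded_above[of V "\<lambda>v. card (U v \<times> {v})" N] by (simp add: card_cartesian_product)
  also have "\<dots> \<le> N * N"
    using V by simp
  finally show "card P \<le> (nat \<lfloor>2*R/e\<rfloor> + 1)^2" unfolding N_def by (simp add: power2_eq_square)
qed

lemma card_rec_seqs_le:
  fixes e R :: real
  assumes "k \<ge> 3" "e > 0" "R \<ge> 0"
    and "\<And>xs. xs \<in> rec_seqs a b 1 k n \<Longrightarrow>
      \<bar>of_int n - e * of_int (xs ! (k-2))\<bar> \<le> R \<and> \<bar>of_int (xs ! (k-2)) - e * of_int (xs ! (k-3))\<bar> \<le> R"
  shows "card (rec_seqs a b 1 k n) \<le> (nat \<lfloor>2*R/e\<rfloor> + 1)^2"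
proof -
  let ?last_two = "\<lambda>xs. (xs ! (k-3), xs ! (k-2))"
  have "card (rec_seqs a b 1 k n) = card (?last_two ` rec_seqs a b 1 k n)"
    using inj_on_last_two_rec_seqs[OF assms(1)] by (simp add: card_image)
  also have "\<dots> \<le> card {(u::int, v::int). \<bar>n - e * v\<bar> \<le> R \<and> \<bar>v - e * u\<bar> \<le> R}"
    using assms(4) card_int_pairs_near_le(1)[OF assms(2,3)] by (intro card_mono) auto
  also have "\<dots> \<le> (nat \<lfloor>2*R/e\<rfloor> + 1)^2"
    by (rule card_int_pairs_near_le(2)[OF assms(2,3)])
  finally show ?thesis .
qed

section \<open>A cubic with a single real root\<close>

locale cubic_single_root =
  fixes a b :: nat and \<eta> :: real
  assumes single_root: "{x::real. x^3 - real a * x^2 - real b * x - 1 = 0} = {\<eta>}"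
    and eta_gt_1: "\<eta> > 1"

sublocale cubic_single_root \<subseteq> cubic_unit_root "real a" "real b" \<eta>
proof
  show "\<eta> > 0" using eta_gt_1 by simp
  have "\<eta> \<in> {x::real. x^3 - real a * x^2 - real b * x - 1 = 0}" using single_root by simp
  then show "\<eta>^3 = real a * \<eta>^2 + real b * \<eta> + 1" by simp
qed

context cubic_single_root
begin

lemma discriminant_neg: "(\<eta> - a)^2 < 4 * (1/\<eta>)"
proof (rule ccontr)
  assume "\<not> ?thesis"
  then have D: "(\<eta> - a)^2 - 4 * (1/\<eta>) \<ge> 0" by simp
  define x0 where "x0 = (sqrt ((\<eta> - a)^2 - 4 * (1/\<eta>)) - (\<eta> - a)) / 2"
  have "x0^2 + (\<eta> - a) * x0 + 1/\<eta> = 0"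
    using D unfolding x0_def by (simp add: field_simps power2_eq_square)
  then have "x0 \<in> {x::real. x^3 - real a * x^2 - real b * x - 1 = 0}"
    using cubic_factor[of x0] by simp
  then have "x0 = \<eta>" using single_root by auto
  then have "\<eta> * (\<eta>^2 + (\<eta> - a) * \<eta> + 1/\<eta>) = 0"
    using \<open>x0^2 + (\<eta> - a) * x0 + 1/\<eta> = 0\<close> by simp
  moreover have "\<eta> * (\<eta>^2 + (\<eta> - a) * \<eta> + 1/\<eta>) = 2 * \<eta>^3 - a * \<eta>^2 + 1"
    using eta_pos by (simp add: field_simps power2_eq_square power3_eq_cube)
  moreover have "2 * \<eta>^3 - a * \<eta>^2 + 1 = a * \<eta>^2 + 2 * b * \<eta> + 3"
    using root by simp
  moreover have "a * \<eta>^2 \<ge> 0" "b * \<eta> \<ge> 0"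
    using eta_pos by simp_all
  ultimately show False by linarith
qed

lemma decay_ge_dev_sq:
  obtains d where "d > 0" "\<And>x m. d * dev x m ^ 2 \<le> decay x m" "\<And>x m. d * dev x (m+1) ^ 2 \<le> decay x m"
  using bqf_pos_def[of "\<eta> - a" "1/\<eta>"] discriminant_neg unfolding decay_def by metis

lemma dev_sq_le_growth_sq:
  obtains \<kappa> where "\<kappa> > 0"
    and "\<And>x k m. rec_on k x \<Longrightarrow> (\<And>i. i < k \<Longrightarrow> x i > 0) \<Longrightarrow> m + 2 < k \<Longrightarrow>
      dev x m ^ 2 * \<eta>^(3*m) \<le> \<kappa> * growth x m ^ 2 \<and> dev x (m+1) ^ 2 * \<eta>^(3*m) \<le> \<kappa> * growth x m ^ 2"
proof -
  obtain d where d: "d > 0" "\<And>x m. d * dev x m ^ 2 \<le> decay x m" "\<And>x m. d * dev x (m+1) ^ 2 \<le> decay x m"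
    using decay_ge_dev_sq by blast
  define C where "C = (1 + \<bar>\<eta> - a\<bar> + 1/\<eta>) * (2*\<eta>^2)^2"
  show thesis
  proof (rule that)
    show "C/d > 0" unfolding C_def using d(1) eta_pos by (simp add: add_pos_nonneg)
    fix x k m assume "rec_on k x" "\<And>i. i < k \<Longrightarrow> x i > 0" "m + 2 < k"
    then have "decay x m * \<eta>^(3*m) \<le> C * growth x m ^ 2"
      using decay_mult_power_le_growth_sq eta_gt_1 unfolding C_def by (simp add: power_mult_distrib mult.assoc)
    moreover have "d * y ^ 2 * \<eta>^(3*m) \<le> C * growth x m ^ 2 \<Longrightarrow> y ^ 2 * \<eta>^(3*m) \<le> C/d * growth x m ^ 2" for y
      using d(1) by (simp add: field_simps)
    ultimately show "dev x m ^ 2 * \<eta>^(3*m) \<le> C/d * growth x m ^ 2 \<and>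
        dev x (m+1) ^ 2 * \<eta>^(3*m) \<le> C/d * growth x m ^ 2"
      using d(2,3)[of x m] eta_pos by (meson mult_right_mono order_trans zero_le_power less_imp_le)
  qed
qed

lemma growth_pos:
  assumes "x m > 0" "x (m+1) > 0" "x (m+2) > 0"
  shows "growth x m > 0"
proof -
  have "(b + 1/\<eta>) * x (m+1) \<ge> 0" "\<eta> * x (m+2) \<ge> 0" using assms eta_pos by simp_all
  then show ?thesis unfolding growth_def using assms by linarith
qed

lemma growth_le_of_small_dev:
  defines "K \<equiv> 1 + b + 1/\<eta> + \<eta>"
  assumes "x m \<ge> 0" "x (m+1) \<ge> 0"
    and "4 * K * \<bar>dev x m\<bar> \<le> growth x m" "4 * K * \<bar>dev x (m+1)\<bar> \<le> growth x m"
  shows "growth x m \<le> 2 * K * x (m+2)"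
proof -
  define L where "L = growth x m"
  define P where "P = x (m+2) + L / (2*K)"
  have K: "K > 0" unfolding K_def using eta_pos by (simp add: add_pos_nonneg)
  have "\<bar>x (m+1) - \<eta> * x m\<bar> \<le> L / (4*K)" "\<bar>x (m+2) - \<eta> * x (m+1)\<bar> \<le> L / (4*K)"
    using assms(4,5) K unfolding L_def dev_def by (simp_all add: field_simps numeral_2_eq_2)
  moreover have "x (m+1) \<le> \<eta> * x (m+1)" "x m \<le> \<eta> * x m"
    using mult_right_mono[of 1 \<eta>] assms(2,3) eta_gt_1 by simp_all
  moreover have "L / (4*K) + L / (4*K) = L / (2*K)" by simp
  moreover have "L \<ge> 0" using assms(4) K unfolding L_def by (smt (verit) mult_nonneg_nonneg)
  ultimately have P: "x (m+1) \<le> P" "x m \<le> P" "x (m+2) \<le> P"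
    unfolding P_def by (simp_all add: abs_le_iff)
  have "L \<le> P + (b + 1/\<eta>) * P + \<eta> * P"
    using P eta_pos unfolding L_def growth_def by (intro add_mono mult_left_mono) simp_all
  also have "\<dots> = K * P"
    unfolding K_def by (simp add: algebra_simps)
  also have "\<dots> = K * x (m+2) + L / 2"
    using K unfolding P_def by (simp add: distrib_left)
  finally show ?thesis unfolding L_def by simp
qed

lemma rec_on_of_rec_seqs:
  assumes "xs \<in> rec_seqs (int a) (int b) 1 k n"
  shows "rec_on k (\<lambda>i. of_int (xs ! i))" "\<And>i. i < k \<Longrightarrow> of_int (xs ! i) > (0::real)"
  using rec_seqsD(2,3)[OF assms] unfolding rec_on_def by simp_all

lemma growth_le_of_late_window:
  defines "K \<equiv> 1 + b + 1/\<eta> + \<eta>"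
  assumes "x m > 0" "x (m+1) > 0" "x (m+2) > 0" "16 * K^2 * \<kappa> \<le> \<eta>^(3*m)"
    and "dev x m ^ 2 * \<eta>^(3*m) \<le> \<kappa> * growth x m ^ 2" "dev x (m+1) ^ 2 * \<eta>^(3*m) \<le> \<kappa> * growth x m ^ 2"
  shows "growth x m \<le> 2 * K * x (m+2)"
proof -
  have "growth x m > 0" using assms(2-4) by (rule growth_pos)
  have "4 * K * \<bar>y\<bar> \<le> growth x m" if "y^2 * \<eta>^(3*m) \<le> \<kappa> * growth x m ^ 2" for y
  proof -
    have "(4 * K * \<bar>y\<bar>)^2 * \<eta>^(3*m) = 16 * K^2 * (y^2 * \<eta>^(3*m))"
      by (simp add: power_mult_distrib)
    also have "\<dots> \<le> 16 * K^2 * \<kappa> * growth x m ^ 2"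
      using that by (simp add: mult.assoc mult_left_mono)
    also have "\<dots> \<le> \<eta>^(3*m) * growth x m ^ 2"
      using assms(5) by (simp add: mult_right_mono)
    finally have "(4 * K * \<bar>y\<bar>)^2 \<le> growth x m ^ 2"
      using eta_pos by (simp add: mult.commute)
    then show ?thesis
      by (rule power2_le_imp_le) (use \<open>growth x m > 0\<close> in simp)
  qed
  then show ?thesis
    using growth_le_of_small_dev assms(2,3,6,7) unfolding K_def by (simp add: less_imp_le)
qed

lemma growth_last_window_le_power:
  defines "K \<equiv> 1 + real b + 1/\<eta> + \<eta>"
  assumes "k \<ge> 3" "finite (rec_seqs (int a) (int b) 1 k n)" "xs \<in> rec_seqs (int a) (int b) 1 k n"
  shows "growth (\<lambda>i. of_int (xs ! i)) (k-3) \<le> K * (1 + real a + real b)^(k-2) * of_int n"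
proof -
  define x where "x i = real_of_int (xs ! i)" for i
  define P where "P = (1 + real a + real b)^(k-2) * of_int n"
  have "n > 0" using rec_seqsD(2)[OF assms(4), of "k-1"] rec_seqsD(4)[OF assms(4)] assms(2) by simp
  have "x i \<le> P" if "i \<le> k - 2" for i
  proof -
    have "xs ! i \<le> n * (1 + int a + int b)^i"
      using rec_seqs_nth_le[OF _ _ assms(3,4,2), of i] that assms(2) by simp
    then have "x i \<le> of_int (n * (1 + int a + int b)^i)"
      unfolding x_def by (simp only: of_int_le_iff)
    also have "\<dots> = (1 + real a + real b)^i * n" by simp
    also have "\<dots> \<le> P"
      unfolding P_def using that \<open>n > 0\<close> by (intro mult_right_mono power_increasing) simp_all
    finally show ?thesis .
  qed
  moreover have "x (k-1) \<le> P"
    using rec_seqsD(4)[OF assms(4)] \<open>n > 0\<close> unfolding x_def P_def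
    by (simp add: mult_le_cancel_right1)
  moreover have "k - 3 + 1 = k - 2" "k - 3 + 2 = k - 1" using assms(2) by simp_all
  ultimately have "growth x (k-3) \<le> P + (b + 1/\<eta>) * P + \<eta> * P"
    unfolding growth_def using eta_pos by (intro add_mono mult_left_mono) simp_all
  also have "\<dots> = K * P" unfolding K_def by (simp add: algebra_simps)
  finally show ?thesis unfolding x_def P_def by (simp add: mult.assoc)
qed

lemma growth_last_window_le:
  obtains C where "C > 0"
    and "\<And>n k xs. k \<ge> 3 \<Longrightarrow> finite (rec_seqs (int a) (int b) 1 k n) \<Longrightarrow>
      xs \<in> rec_seqs (int a) (int b) 1 k n \<Longrightarrow> growth (\<lambda>i. of_int (xs ! i)) (k-3) \<le> C * of_int n"
proof -
  obtain \<kappa> where "\<kappa> > 0" and \<kappa>: "\<And>x k m. rec_on k x \<Longrightarrow> (\<And>i. i < k \<Longrightarrow> x i > 0) \<Longrightarrow> m + 2 < k \<Longrightarrow>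
      dev x m ^ 2 * \<eta>^(3*m) \<le> \<kappa> * growth x m ^ 2 \<and> dev x (m+1) ^ 2 * \<eta>^(3*m) \<le> \<kappa> * growth x m ^ 2"
    using dev_sq_le_growth_sq by blast
  define K where "K = 1 + b + 1/\<eta> + \<eta>"
  have "K > 0" unfolding K_def using eta_pos by (simp add: add_pos_nonneg)
  obtain m0 where m0: "16 * K^2 * \<kappa> < \<eta>^m0"
    using real_arch_pow[OF eta_gt_1] by blast
  define B where "B = (1 + real a + real b)^m0"
  have "B \<ge> 1" unfolding B_def by simp
  show thesis
  proof (rule that[of "2 * K * B"])
    show "2 * K * B > 0" using \<open>K > 0\<close> \<open>B \<ge> 1\<close> by simp
    fix n k xs assume "k \<ge> 3" and fin: "finite (rec_seqs (int a) (int b) 1 k n)"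
      and xs: "xs \<in> rec_seqs (int a) (int b) 1 k n"
    define x where "x i = real_of_int (xs ! i)" for i
    define m where "m = k - 3"
    have "m + 2 = k - 1" using \<open>k \<ge> 3\<close> unfolding m_def by simp
    then have x: "rec_on k x" "\<And>i. i < k \<Longrightarrow> x i > 0" "m + 2 < k" "x (m+2) = n"
      using rec_on_of_rec_seqs[OF xs] rec_seqsD(4)[OF xs] \<open>k \<ge> 3\<close> unfolding x_def by auto
    have "n > 0" using x(2)[of "m+2"] x(3,4) by simp
    have "growth x m \<le> 2 * K * B * n"
    \<comment> \<open>Early windows are finitely many, so a bound exponential in k suffices for them.\<close>
    proof (cases "16 * K^2 * \<kappa> < \<eta>^(3*m)")
      case True
      then have "growth x m \<le> 2 * K * x (m+2)"
        using growth_le_of_late_window[of x m \<kappa>] \<kappa>[OF x(1,2,3)] x(2,3) unfolding K_def by simp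
      moreover have "2 * K * n * 1 \<le> 2 * K * n * B"
        using \<open>K > 0\<close> \<open>B \<ge> 1\<close> \<open>n > 0\<close> by (intro mult_left_mono) simp_all
      ultimately show ?thesis
        using x(4) by (simp add: mult_ac)
    next
      case False
      then have "3 * m < m0"
        using m0 power_less_imp_less_exp[OF eta_gt_1, of "3*m" m0] by linarith
      then have "(1 + real a + real b)^(k-2) \<le> B"
        unfolding B_def m_def using \<open>k \<ge> 3\<close> by (intro power_increasing) simp_all
      then have "K * (1 + real a + real b)^(k-2) * n \<le> K * B * n"
        using \<open>K > 0\<close> \<open>n > 0\<close> by (simp add: mult_right_mono)
      then have "growth x m \<le> K * B * n"
        using growth_last_window_le_power[OF \<open>k \<ge> 3\<close> fin xs]
        unfolding x_def m_def K_def by simp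
      moreover have "K * B * n \<ge> 0" using \<open>K > 0\<close> \<open>B \<ge> 1\<close> \<open>n > 0\<close> by simp
      ultimately show ?thesis by linarith
    qed
    then show "growth (\<lambda>i. of_int (xs ! i)) (k-3) \<le> 2 * K * B * of_int n"
      unfolding x_def m_def by simp
  qed
qed

lemma last_window_dev_le:
  obtains Q where "Q > 0"
    and "\<And>n k xs. k \<ge> 3 \<Longrightarrow> finite (rec_seqs (int a) (int b) 1 k n) \<Longrightarrow>
      xs \<in> rec_seqs (int a) (int b) 1 k n \<Longrightarrow>
      \<bar>of_int n - \<eta> * of_int (xs ! (k-2))\<bar> \<le> Q * n / \<eta> powr (3 * real (k-3) / 2) \<and>
      \<bar>of_int (xs ! (k-2)) - \<eta> * of_int (xs ! (k-3))\<bar> \<le> Q * n / \<eta> powr (3 * real (k-3) / 2)"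
proof -
  obtain \<kappa> where "\<kappa> > 0" and \<kappa>: "\<And>x k m. rec_on k x \<Longrightarrow> (\<And>i. i < k \<Longrightarrow> x i > 0) \<Longrightarrow> m + 2 < k \<Longrightarrow>
      dev x m ^ 2 * \<eta>^(3*m) \<le> \<kappa> * growth x m ^ 2 \<and> dev x (m+1) ^ 2 * \<eta>^(3*m) \<le> \<kappa> * growth x m ^ 2"
    using dev_sq_le_growth_sq by blast
  obtain C where "C > 0" and C: "\<And>n k xs. k \<ge> 3 \<Longrightarrow> finite (rec_seqs (int a) (int b) 1 k n) \<Longrightarrow>
      xs \<in> rec_seqs (int a) (int b) 1 k n \<Longrightarrow> growth (\<lambda>i. of_int (xs ! i)) (k-3) \<le> C * of_int n"
    using growth_last_window_le by blast
  show thesis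
  proof (rule that[of "sqrt \<kappa> * C"])
    show "sqrt \<kappa> * C > 0" using \<open>\<kappa> > 0\<close> \<open>C > 0\<close> by simp
    fix n k xs assume "k \<ge> 3" and fin: "finite (rec_seqs (int a) (int b) 1 k n)"
      and xs: "xs \<in> rec_seqs (int a) (int b) 1 k n"
    define x where "x i = real_of_int (xs ! i)" for i
    define m where "m = k - 3"
    have idx: "m + 1 = k - 2" "m + 2 = k - 1" "m + 2 < k" using \<open>k \<ge> 3\<close> unfolding m_def by auto
    have "n > 0" using rec_seqsD(2)[OF xs, of "k-1"] rec_seqsD(4)[OF xs] \<open>k \<ge> 3\<close> by simp
    have "growth x m > 0"
      using rec_on_of_rec_seqs(2)[OF xs] idx unfolding x_def by (intro growth_pos) auto
    have "growth x m \<le> C * n" using C[OF \<open>k \<ge> 3\<close> fin xs] unfolding x_def m_def .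
    then have "growth x m ^ 2 \<le> (C * n)^2"
      using \<open>growth x m > 0\<close> by (simp add: power_mono)
    then have "\<kappa> * growth x m ^ 2 \<le> (sqrt \<kappa> * C * n)^2"
      using \<open>\<kappa> > 0\<close> by (simp add: power_mult_distrib mult.assoc)
    moreover have "rec_on k x" "\<And>i. i < k \<Longrightarrow> x i > 0"
      using rec_on_of_rec_seqs[OF xs] unfolding x_def by simp_all
    ultimately have "dev x m ^ 2 * \<eta>^(3*m) \<le> (sqrt \<kappa> * C * n)^2"
      "dev x (m+1) ^ 2 * \<eta>^(3*m) \<le> (sqrt \<kappa> * C * n)^2"
      using \<kappa>[of k x m] idx(3) by (meson order_trans)+
    then have "\<bar>dev x m\<bar> \<le> sqrt \<kappa> * C * n / sqrt (\<eta>^(3*m))"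
      "\<bar>dev x (m+1)\<bar> \<le> sqrt \<kappa> * C * n / sqrt (\<eta>^(3*m))"
      using eta_pos \<open>\<kappa> > 0\<close> \<open>C > 0\<close> \<open>n > 0\<close> by (simp_all add: abs_le_of_sq_mult_le)
    moreover have "sqrt (\<eta>^(3*m)) = \<eta> powr (3 * real m / 2)"
      using eta_pos by (simp add: powr_half_sqrt[symmetric] powr_realpow[symmetric] powr_powr)
    moreover have "dev x m = of_int (xs ! (k-2)) - \<eta> * of_int (xs ! (k-3))"
      "dev x (m+1) = of_int n - \<eta> * of_int (xs ! (k-2))"
      using rec_seqsD(4)[OF xs] idx unfolding dev_def x_def m_def by simp_all
    ultimately show "\<bar>of_int n - \<eta> * of_int (xs ! (k-2))\<bar> \<le> sqrt \<kappa> * C * n / \<eta> powr (3 * real (k-3) / 2) \<and>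
      \<bar>of_int (xs ! (k-2)) - \<eta> * of_int (xs ! (k-3))\<bar> \<le> sqrt \<kappa> * C * n / \<eta> powr (3 * real (k-3) / 2)"
      unfolding m_def by simp
  qed
qed

lemma card_rec_seqs_bound:
  "\<exists>T. \<forall>n k :: nat. n > 0 \<longrightarrow> k \<ge> 3 \<longrightarrow>
     real (card (rec_seqs (int a) (int b) 1 k (int n))) \<le> (real_of_int \<lceil>T * n / \<eta> powr (3 * real k / 2)\<rceil>)^2"
proof -
  obtain Q where "Q > 0" and Q: "\<And>n k xs. k \<ge> 3 \<Longrightarrow> finite (rec_seqs (int a) (int b) 1 k n) \<Longrightarrow>
      xs \<in> rec_seqs (int a) (int b) 1 k n \<Longrightarrow>
      \<bar>of_int n - \<eta> * of_int (xs ! (k-2))\<bar> \<le> Q * n / \<eta> powr (3 * real (k-3) / 2) \<and>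
      \<bar>of_int (xs ! (k-2)) - \<eta> * of_int (xs ! (k-3))\<bar> \<le> Q * n / \<eta> powr (3 * real (k-3) / 2)"
    using last_window_dev_le by blast
  show ?thesis
  proof (intro exI allI impI)
    fix n k :: nat assume "n > 0" "k \<ge> 3"
    define S where "S = rec_seqs (int a) (int b) 1 k (int n)"
    define R where "R = Q * n / \<eta> powr (3 * real (k-3) / 2)"
    define w where "w = 2 * R / \<eta>"
    have "w > 0" unfolding w_def R_def using \<open>Q > 0\<close> \<open>n > 0\<close> eta_pos by simp
    have card_le: "card S \<le> (nat \<lfloor>w\<rfloor> + 1)^2" if "finite S"
    proof -
      have "R \<ge> 0" unfolding R_def using \<open>Q > 0\<close> by simp
      moreover have "\<bar>of_int (int n) - \<eta> * of_int (xs ! (k-2))\<bar> \<le> R \<and>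
          \<bar>of_int (xs ! (k-2)) - \<eta> * of_int (xs ! (k-3))\<bar> \<le> R" if "xs \<in> S" for xs
        using Q[OF \<open>k \<ge> 3\<close> \<open>finite S\<close>[unfolded S_def] that[unfolded S_def]] unfolding R_def by simp
      ultimately show ?thesis
        unfolding S_def w_def using card_rec_seqs_le[OF \<open>k \<ge> 3\<close> eta_pos] by blast
    qed
    have "real (card S) \<le> (real_of_int \<lceil>2 * w\<rceil>)^2"
    proof (cases "finite S")
      case True
      then have "real (card S) \<le> real ((nat \<lfloor>w\<rfloor> + 1)^2)"
        using card_le by (simp only: of_nat_le_iff)
      then show ?thesis
        using sq_nat_floor_add_one_le_sq_ceiling_double[OF \<open>w > 0\<close>] by linarith
    qed simp \<comment> \<open>an infinite set has card 0\<close>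
    moreover have "2 * w = 4 * Q * \<eta> powr (9/2) / \<eta> * n / \<eta> powr (3 * real k / 2)"
    proof -
      have "2 * (2 * (Q * n / P) / \<eta>) = 4 * Q * E / \<eta> * n / (P * E)" if "P > 0" "E > 0" for P E :: real
        using that eta_pos by (simp add: field_simps)
      then show ?thesis
        unfolding w_def R_def powr_three_halves_split[OF \<open>k \<ge> 3\<close>] using eta_pos by simp
    qed
    ultimately show "real (card (rec_seqs (int a) (int b) 1 k (int n)))
        \<le> (real_of_int \<lceil>4 * Q * \<eta> powr (9/2) / \<eta> * n / \<eta> powr (3 * real k / 2)\<rceil>)^2"
      unfolding S_def by simp
  qed
qed

end

theorem theorem6:
  fixes a b c :: nat and \<eta> :: real
  assumes "c = 1"
    and "{x::real. x ^ 3 - real a * x ^ 2 - real b * x - real c = 0} = {\<eta>}"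
    and "\<eta> > 1"
  shows "\<exists>T::real. \<forall>n k :: nat. n > 0 \<longrightarrow> k \<ge> 4 \<longrightarrow>
           real (card (rec_seqs (int a) (int b) (int c) k (int n)))
             \<le> (real_of_int \<lceil>T * real n / \<eta> powr (3 * real k / 2)\<rceil>) ^ 2"
proof -
  interpret cubic_single_root a b \<eta>
    using assms by unfold_locales simp_all
  obtain T where "\<forall>n k :: nat. n > 0 \<longrightarrow> k \<ge> 3 \<longrightarrow>
      real (card (rec_seqs (int a) (int b) 1 k (int n))) \<le> (real_of_int \<lceil>T * n / \<eta> powr (3 * real k / 2)\<rceil>)^2"
    using card_rec_seqs_bound by blast
  then show ?thesis using \<open>c = 1\<close> by (intro exI[of _ T]) simp
qed

end
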